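(* No twisted differential operator is globally hypo-elliptic.
   Context: $D_x=-\mathrm i\partial_x$, $D_y=-\mathrm i\partial_y$, $M_x,M_y$ multiplication by $x,y$ on $\mathbb R^2$. A twisted differential operator of order $m$ is $A=\sum_{j+k\le m}(-1)^{j+k}a_{kj}(\alpha D_y-\beta M_x)^j(\gamma D_x-\delta M_y)^k$ with $\alpha,\beta,\gamma,\delta\in\mathbb R$, $\alpha\delta-\beta\gamma=1$, $\beta\delta\ne0$, $a_{kj}\in\mathbb C$, $\sum_{j+k=m}|a_{kj}|\ne0$. The symbol of a differential operator written as $\sum_{|\alpha|\le m}a_\alpha(x)D^\alpha$ (coefficients to the left, $D_j=-\mathrm i\partial_j$) is $a(x,\xi)=\sum_{|\alpha|\le m}a_\alpha(x)\xi^\alpha$. An operator on $\mathcal S'(\mathbb R^n)$ with polynomial symbol $a(x,\xi)$ is globally hypo-elliptic if $a$ does not vanish outside a compact subset of $\mathbb R^{2n}$ and $\lim_{|x|+|\xi|\to\infty}\partial_x^\alpha\partial_\xi^\beta a(x,\xi)/a(x,\xi)=0$ for all $|\alpha|+|\beta|=1$. *)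

theory Defs
  imports "HOL-Analysis.Analysis"
begin

definition Dx :: "(real \<times> real \<Rightarrow> complex) \<Rightarrow> (real \<times> real \<Rightarrow> complex)" where
  "Dx u = (\<lambda>(x,y). - \<i> * vector_derivative (\<lambda>t. u (t, y)) (at x))"

definition Dy :: "(real \<times> real \<Rightarrow> complex) \<Rightarrow> (real \<times> real \<Rightarrow> complex)" where
  "Dy u = (\<lambda>(x,y). - \<i> * vector_derivative (\<lambda>t. u (x, t)) (at y))"

fun Dword :: "bool list \<Rightarrow> (real \<times> real \<Rightarrow> complex) \<Rightarrow> (real \<times> real \<Rightarrow> complex)" where
  "Dword [] u = u"
| "Dword (b # bs) u = (if b then Dx else Dy) (Dword bs u)"

definition smooth2 :: "(real \<times> real \<Rightarrow> complex) \<Rightarrow> bool" where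
  "smooth2 u \<longleftrightarrow> (\<forall>ws. Dword ws u differentiable_on UNIV)"

definition twP :: "real \<Rightarrow> real \<Rightarrow> (real \<times> real \<Rightarrow> complex) \<Rightarrow> (real \<times> real \<Rightarrow> complex)" where
  "twP \<alpha> \<beta> u = (\<lambda>(x,y). complex_of_real \<alpha> * Dy u (x,y) - complex_of_real (\<beta> * x) * u (x,y))"

definition twQ :: "real \<Rightarrow> real \<Rightarrow> (real \<times> real \<Rightarrow> complex) \<Rightarrow> (real \<times> real \<Rightarrow> complex)" where
  "twQ \<gamma> \<delta> u = (\<lambda>(x,y). complex_of_real \<gamma> * Dx u (x,y) - complex_of_real (\<delta> * y) * u (x,y))"

definition twisted_op ::
  "nat \<Rightarrow> (nat \<Rightarrow> nat \<Rightarrow> complex) \<Rightarrow> real \<Rightarrow> real \<Rightarrow> real \<Rightarrow> real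
    \<Rightarrow> (real \<times> real \<Rightarrow> complex) \<Rightarrow> (real \<times> real \<Rightarrow> complex)" where
  "twisted_op m a \<alpha> \<beta> \<gamma> \<delta> u = (\<lambda>z. \<Sum>(k,j)\<in>{(k,j). j + k \<le> m}.
      (-1) ^ (j + k) * a k j * ((twP \<alpha> \<beta> ^^ j) ((twQ \<gamma> \<delta> ^^ k) u)) z)"

definition represents ::
  "((real \<times> real \<Rightarrow> complex) \<Rightarrow> (real \<times> real \<Rightarrow> complex)) \<Rightarrow> nat
     \<Rightarrow> (nat \<Rightarrow> nat \<Rightarrow> real \<times> real \<Rightarrow> complex) \<Rightarrow> bool" where
  "represents A N c \<longleftrightarrow> (\<forall>u. smooth2 u \<longrightarrow>
     A u = (\<lambda>z. \<Sum>p\<le>N. \<Sum>q\<le>N. c p q z * (Dx ^^ p) ((Dy ^^ q) u) z))"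

definition symbol_of ::
  "nat \<Rightarrow> (nat \<Rightarrow> nat \<Rightarrow> real \<times> real \<Rightarrow> complex) \<Rightarrow> (real \<times> real) \<times> (real \<times> real) \<Rightarrow> complex" where
  "symbol_of N c = (\<lambda>((x,y),(\<xi>,\<eta>)). \<Sum>p\<le>N. \<Sum>q\<le>N.
      c p q (x,y) * complex_of_real \<xi> ^ p * complex_of_real \<eta> ^ q)"

definition pdir :: "('a::euclidean_space \<Rightarrow> complex) \<Rightarrow> 'a \<Rightarrow> 'a \<Rightarrow> complex" where
  "pdir f b z = vector_derivative (\<lambda>t. f (z + t *\<^sub>R b)) (at 0)"

definition glob_hypoelliptic :: "('a::euclidean_space \<Rightarrow> complex) \<Rightarrow> bool" where
  "glob_hypoelliptic a \<longleftrightarrow>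
     (\<exists>K. compact K \<and> (\<forall>z. z \<notin> K \<longrightarrow> a z \<noteq> 0)) \<and>
     (\<forall>b\<in>Basis. ((\<lambda>z. pdir a b z / a z) \<longlongrightarrow> 0) at_infinity)"

end

theory Submission
  imports Defs "HOL-Computational_Algebra.Polynomial"
begin

text \<open>Applied to a plane wave \<open>e^{i(x\<xi> + y\<eta>)}\<close>, each twisted factor returns the plane wave
  times a polynomial in the real affine forms \<open>t = \<gamma>\<xi> - \<delta>y\<close> and \<open>s = \<alpha>\<eta> - \<beta>x - u t\<close>, where the
  shear parameter \<open>u\<close> is free. Hence the symbol of \<open>A\<close> is \<open>F(s,t)\<close> for a polynomial \<open>F\<close> whose
  coefficient of \<open>t^m\<close> is the constant \<open>(-1)^m \<Sum>\<^sub>j a(m-j, j) u^j\<close>, nonzero for a suitable real \<open>u\<close>.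
  Then \<open>F(0,\<cdot>)\<close> has degree \<open>m \<ge> 1\<close>, so \<open>\<partial>\<^sub>tF(0,t\<^sub>0) \<noteq> 0\<close> for some real \<open>t\<^sub>0\<close>. Since \<open>\<beta>\<delta> \<noteq> 0\<close>, the
  fibre \<open>{s = 0, t = t\<^sub>0}\<close> contains a ray going to infinity along which the symbol is the constant
  \<open>F(0,t\<^sub>0)\<close> and its \<open>x\<close>- or \<open>y\<close>-derivative is a nonzero constant: either the symbol vanishes far
  out, or its logarithmic derivative does not tend to \<open>0\<close>.\<close>

definition poly2 :: "'a::comm_ring_1 poly poly \<Rightarrow> 'a \<Rightarrow> 'a \<Rightarrow> 'a" where
  "poly2 G s t = poly (map_poly (\<lambda>c. poly c s) G) t"

lemma poly2_0 [simp]: "poly2 0 s t = 0"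
  by (simp add: poly2_def)

lemma poly2_pCons [simp]: "poly2 (pCons c G) s t = poly c s + t * poly2 G s t"
  by (simp add: poly2_def map_poly_pCons)

lemma poly2_add [simp]: "poly2 (G + H) s t = poly2 G s t + poly2 H s t"
proof -
  have "map_poly (\<lambda>c. poly c s) (G + H) = map_poly (\<lambda>c. poly c s) G + map_poly (\<lambda>c. poly c s) H"
    by (intro poly_eqI) (simp add: coeff_map_poly)
  then show ?thesis
    by (simp add: poly2_def)
qed

lemma poly2_smult [simp]: "poly2 (smult c G) s t = poly c s * poly2 G s t"
  by (induction G rule: pCons_induct) (auto simp: algebra_simps)

lemma poly2_minus [simp]: "poly2 (- G) s t = - poly2 G s t"
  using poly2_add[of G "- G" s t] by (simp add: eq_neg_iff_add_eq_0 add.commute)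

lemma poly2_diff [simp]: "poly2 (G - H) s t = poly2 G s t - poly2 H s t"
  using poly2_add[of G "- H" s t] by simp

lemma poly2_sum: "poly2 (sum F A) s t = (\<Sum>i\<in>A. poly2 (F i) s t)"
  by (induction A rule: infinite_finite_induct) auto

lemma poly2_affine_has_field_derivative:
  fixes a b c d :: "'a::real_normed_field"
  shows "((\<lambda>w. poly2 G (a + b * w) (c + d * w)) has_field_derivative
    b * poly2 (map_poly pderiv G) (a + b * w) (c + d * w) + d * poly2 (pderiv G) (a + b * w) (c + d * w))
    (at w)"
proof (induction G rule: pCons_induct)
  case 0
  then show ?case by simp
next
  case (pCons e G)
  have e: "((\<lambda>w. poly e (a + b * w)) has_field_derivative poly (pderiv e) (a + b * w) * b) (at w)"
    by (rule DERIV_chain2[OF poly_DERIV]) (auto intro!: derivative_eq_intros)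
  have t: "((\<lambda>w. c + d * w) has_field_derivative d) (at w)"
    by (auto intro!: derivative_eq_intros)
  have "((\<lambda>w. poly e (a + b * w) + (c + d * w) * poly2 G (a + b * w) (c + d * w))
      has_field_derivative poly (pderiv e) (a + b * w) * b + (d * poly2 G (a + b * w) (c + d * w)
        + (c + d * w) * (b * poly2 (map_poly pderiv G) (a + b * w) (c + d * w)
        + d * poly2 (pderiv G) (a + b * w) (c + d * w)))) (at w)"
    using DERIV_add[OF e DERIV_mult[OF t pCons.IH]] by (simp add: algebra_simps)
  then show ?case
    by (simp add: pderiv_pCons map_poly_pCons algebra_simps)
qed

lemma vector_derivative_of_real_comp:
  assumes "(f has_field_derivative f') (at (of_real x))"
  shows "vector_derivative (\<lambda>t::real. f (of_real t)) (at x) = f'"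
  using vector_derivative_at[OF has_vector_derivative_real_field[OF assms]] .

text \<open>A polynomial \<open>G \<in> \<complex>[s][t]\<close> stands for the function \<open>e^{i(x\<xi> + y\<eta>)} G(s,t)\<close>; the two maps below
  record how the factors \<open>\<gamma>D\<^sub>x - \<delta>M\<^sub>y\<close> and \<open>\<alpha>D\<^sub>y - \<beta>M\<^sub>x\<close> act on it, using \<open>\<partial>\<^sub>xs = -\<beta>\<close>, \<open>\<partial>\<^sub>ys = u\<delta>\<close>,
  \<open>\<partial>\<^sub>yt = -\<delta>\<close> and \<open>\<gamma>\<xi> - \<delta>y = t\<close>, \<open>\<alpha>\<eta> - \<beta>x = s + u t\<close>.\<close>

definition twQ_poly :: "real \<Rightarrow> real \<Rightarrow> complex poly poly \<Rightarrow> complex poly poly" where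
  "twQ_poly \<beta> \<gamma> G = pCons 0 G + smult [:\<i> * of_real (\<beta> * \<gamma>):] (map_poly pderiv G)"

definition twP_poly :: "real \<Rightarrow> real \<Rightarrow> real \<Rightarrow> complex poly poly \<Rightarrow> complex poly poly" where
  "twP_poly \<alpha> \<delta> u G = smult [:0, 1:] G + pCons 0 (smult [:of_real u:] G)
     + smult [:\<i> * of_real (\<alpha> * \<delta>):] (pderiv G - smult [:of_real u:] (map_poly pderiv G))"

definition twisted_poly ::
  "nat \<Rightarrow> (nat \<Rightarrow> nat \<Rightarrow> complex) \<Rightarrow> real \<Rightarrow> real \<Rightarrow> real \<Rightarrow> real \<Rightarrow> real \<Rightarrow> complex poly poly" where
  "twisted_poly m a \<alpha> \<beta> \<gamma> \<delta> u = (\<Sum>(k,j)\<in>{(k,j). j + k \<le> m}.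
     smult [:(-1) ^ (j + k) * a k j:] ((twP_poly \<alpha> \<delta> u ^^ j) ((twQ_poly \<beta> \<gamma> ^^ k) 1)))"

definition principal_poly :: "nat \<Rightarrow> (nat \<Rightarrow> nat \<Rightarrow> complex) \<Rightarrow> complex poly" where
  "principal_poly m a = (\<Sum>j\<le>m. monom (a (m - j) j) j)"

definition const_top_coeff :: "nat \<Rightarrow> 'a::zero poly poly \<Rightarrow> 'a \<Rightarrow> bool" where
  "const_top_coeff n G c \<longleftrightarrow> degree G \<le> n \<and> coeff G n = [:c:]"

lemma degree_map_pderiv_le: "degree (map_poly pderiv G) \<le> degree G"
  by (rule degree_le) (simp add: coeff_map_poly coeff_eq_0)

lemma const_top_coeff_twQ_poly:
  assumes "const_top_coeff n G c"
  shows "const_top_coeff (Suc n) (twQ_poly \<beta> \<gamma> G) c"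
proof -
  have G: "degree G \<le> n" "coeff G n = [:c:]"
    using assms by (auto simp: const_top_coeff_def)
  then have dG': "degree (map_poly pderiv G) \<le> n"
    using degree_map_pderiv_le order_trans by blast
  have "degree (pCons 0 G) \<le> Suc n"
    using G degree_pCons_le[of 0 G] by linarith
  moreover have "degree (smult [:\<i> * of_real (\<beta> * \<gamma>):] (map_poly pderiv G)) \<le> Suc n"
    using dG' degree_smult_le le_SucI order_trans by blast
  ultimately have "degree (twQ_poly \<beta> \<gamma> G) \<le> Suc n"
    unfolding twQ_poly_def using degree_add_le by blast
  moreover have "coeff (map_poly pderiv G) (Suc n) = 0"
    using dG' by (simp add: coeff_eq_0)
  ultimately show ?thesis
    using G by (simp add: const_top_coeff_def twQ_poly_def)
qed

lemma const_top_coeff_twP_poly: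
  assumes "const_top_coeff n G c"
  shows "const_top_coeff (Suc n) (twP_poly \<alpha> \<delta> u G) (of_real u * c)"
proof -
  have G: "degree G \<le> n" "coeff G n = [:c:]"
    using assms by (auto simp: const_top_coeff_def)
  have dG': "degree (map_poly pderiv G) \<le> n"
    using G degree_map_pderiv_le order_trans by blast
  have dG'': "degree (pderiv G) \<le> n"
    using G degree_pderiv[of G] by linarith
  have "degree (pderiv G - smult [:of_real u:] (map_poly pderiv G)) \<le> n"
    using dG' dG'' degree_diff_le degree_smult_le order_trans by blast
  then have "degree (smult [:\<i> * of_real (\<alpha> * \<delta>):]
      (pderiv G - smult [:of_real u:] (map_poly pderiv G))) \<le> Suc n"
    using degree_smult_le le_SucI order_trans by blast
  moreover have "degree (smult [:0, 1:] G) \<le> Suc n"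
    using G degree_smult_le le_SucI order_trans by blast
  moreover have "degree (pCons 0 (smult [:of_real u:] G)) \<le> Suc n"
    using G degree_smult_le[of "[:of_real u:]" G] degree_pCons_le[of 0 "smult [:of_real u:] G"]
    by linarith
  ultimately have "degree (twP_poly \<alpha> \<delta> u G) \<le> Suc n"
    unfolding twP_poly_def using degree_add_le by metis
  moreover have "coeff (pderiv G) (Suc n) = 0" "coeff (map_poly pderiv G) (Suc n) = 0"
      "coeff G (Suc n) = 0"
    using G dG' dG'' by (simp_all add: coeff_eq_0)
  ultimately show ?thesis
    using G by (simp add: const_top_coeff_def twP_poly_def mult.commute)
qed

lemma const_top_coeff_twP_twQ_poly:
  "const_top_coeff (j + k) ((twP_poly \<alpha> \<delta> u ^^ j) ((twQ_poly \<beta> \<gamma> ^^ k) 1)) (of_real u ^ j)"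
proof (induction j)
  case 0
  show ?case
  proof (induction k)
    case 0
    show ?case by (simp add: const_top_coeff_def)
  next
    case (Suc k)
    then show ?case by (simp add: const_top_coeff_twQ_poly)
  qed
next
  case (Suc j)
  then show ?case
    by (auto dest: const_top_coeff_twP_poly simp: mult.commute)
qed

lemma finite_pairs_sum_le: "finite {(k, j). j + k \<le> (m::nat)}"
  by (rule finite_subset[of _ "{..m} \<times> {..m}"]) auto

lemma sum_pairs_sum_eq:
  fixes f :: "nat \<Rightarrow> nat \<Rightarrow> 'a::comm_monoid_add"
  shows "(\<Sum>(k,j)\<in>{(k,j). j + k \<le> m}. if j + k = m then f k j else 0) = (\<Sum>j\<le>m. f (m - j) j)"
proof -
  have "(\<Sum>(k,j)\<in>{(k,j). j + k \<le> m}. if j + k = m then f k j else 0)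
      = (\<Sum>(k,j)\<in>{(k,j). j + k = m}. f k j)"
    by (rule sum.mono_neutral_cong_right[OF finite_pairs_sum_le]) (auto split: if_splits)
  also have "{(k,j). j + k = m} = (\<lambda>j. (m - j, j)) ` {..m}"
    by force
  also have "(\<Sum>(k,j)\<in>(\<lambda>j. (m - j, j)) ` {..m}. f k j) = (\<Sum>j\<le>m. f (m - j) j)"
    by (subst sum.reindex) (auto intro: inj_onI)
  finally show ?thesis .
qed

lemma const_top_coeff_twisted_poly:
  "const_top_coeff m (twisted_poly m a \<alpha> \<beta> \<gamma> \<delta> u)
     ((-1) ^ m * poly (principal_poly m a) (of_real u))"
  unfolding const_top_coeff_def
proof
  show "degree (twisted_poly m a \<alpha> \<beta> \<gamma> \<delta> u) \<le> m"
    unfolding twisted_poly_def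
  proof (rule degree_sum_le[OF finite_pairs_sum_le], clarify)
    fix k j :: nat
    assume "j + k \<le> m"
    then show "degree (smult [:(-1) ^ (j + k) * a k j:]
        ((twP_poly \<alpha> \<delta> u ^^ j) ((twQ_poly \<beta> \<gamma> ^^ k) 1))) \<le> m"
      using const_top_coeff_twP_twQ_poly[of j k \<alpha> \<delta> u \<beta> \<gamma>] degree_smult_le
      unfolding const_top_coeff_def by (meson order_trans)
  qed
next
  have "coeff (twisted_poly m a \<alpha> \<beta> \<gamma> \<delta> u) m = (\<Sum>(k,j)\<in>{(k,j). j + k \<le> m}.
      [:if j + k = m then (-1) ^ m * a k j * of_real u ^ j else 0:])"
    unfolding twisted_poly_def coeff_sum
  proof (rule sum.cong[OF refl], clarify)
    fix k j :: nat
    assume "j + k \<le> m"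
    moreover note const_top_coeff_twP_twQ_poly[of j k \<alpha> \<delta> u \<beta> \<gamma>]
    ultimately show "coeff (smult [:(-1) ^ (j + k) * a k j:]
        ((twP_poly \<alpha> \<delta> u ^^ j) ((twQ_poly \<beta> \<gamma> ^^ k) 1))) m =
        [:if j + k = m then (-1) ^ m * a k j * of_real u ^ j else 0:]"
      by (cases "j + k = m") (auto simp: const_top_coeff_def coeff_eq_0)
  qed
  also have "\<dots> = [:\<Sum>j\<le>m. (-1) ^ m * a (m - j) j * of_real u ^ j:]"
    using sum_pairs_sum_eq[of m "\<lambda>k j. (-1) ^ m * a k j * of_real u ^ j"]
    by (simp add: sum_to_poly case_prod_unfold)
  also have "\<dots> = [:(-1) ^ m * poly (principal_poly m a) (of_real u):]"
    by (simp add: principal_poly_def poly_sum poly_monom sum_distrib_left mult.assoc)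
  finally show "coeff (twisted_poly m a \<alpha> \<beta> \<gamma> \<delta> u) m =
      [:(-1) ^ m * poly (principal_poly m a) (of_real u):]" .
qed

lemma principal_poly_nonzero:
  assumes "\<exists>k j. j + k = m \<and> a k j \<noteq> 0"
  shows "principal_poly m a \<noteq> 0"
proof -
  obtain k j where kj: "j + k = m" "a k j \<noteq> 0"
    using assms by blast
  have "coeff (principal_poly m a) j = (\<Sum>i\<le>m. if i = j then a (m - i) i else 0)"
    unfolding principal_poly_def coeff_sum by (rule sum.cong) (auto simp: coeff_monom)
  also have "\<dots> = a k j"
    using kj by auto
  finally show ?thesis
    using kj(2) by auto
qed

lemma poly_nonzero_at_real:
  fixes p :: "complex poly"
  assumes "p \<noteq> 0"
  shows "\<exists>r::real. poly p (of_real r) \<noteq> 0"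
proof (rule ccontr)
  assume "\<not> ?thesis"
  then have "range (of_real :: real \<Rightarrow> complex) \<subseteq> {z. poly p z = 0}"
    by auto
  then have "finite (range (of_real :: real \<Rightarrow> complex))"
    using poly_roots_finite[OF assms] finite_subset by blast
  moreover have "inj (of_real :: real \<Rightarrow> complex)"
    by (rule injI) simp
  ultimately show False
    using finite_imageD infinite_UNIV_char_0 by blast
qed

lemma degree_map_poly_eval_const_top_coeff:
  assumes "const_top_coeff n G c" and "c \<noteq> 0"
  shows "degree (map_poly (\<lambda>p. poly p s) G) = n"
proof (rule antisym)
  show "degree (map_poly (\<lambda>p. poly p s) G) \<le> n"
    using assms(1) by (intro degree_le) (auto simp: const_top_coeff_def coeff_map_poly coeff_eq_0)
  show "n \<le> degree (map_poly (\<lambda>p. poly p s) G)"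
    using assms by (intro le_degree) (simp add: const_top_coeff_def coeff_map_poly)
qed

definition sheared_poly :: "real \<Rightarrow> real \<Rightarrow> real \<Rightarrow> real \<Rightarrow> real \<Rightarrow> complex poly poly
    \<Rightarrow> (real \<times> real) \<times> (real \<times> real) \<Rightarrow> complex" where
  "sheared_poly \<alpha> \<beta> \<gamma> \<delta> u G = (\<lambda>((x,y),(\<xi>,\<eta>)).
     poly2 G (of_real (\<alpha> * \<eta> - \<beta> * x - u * (\<gamma> * \<xi> - \<delta> * y))) (of_real (\<gamma> * \<xi> - \<delta> * y)))"

definition plane_wave :: "real \<Rightarrow> real \<Rightarrow> real \<times> real \<Rightarrow> complex" where
  "plane_wave \<xi> \<eta> = (\<lambda>(x,y). exp (\<i> * of_real (x * \<xi> + y * \<eta>)))"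

definition twisted_wave :: "real \<Rightarrow> real \<Rightarrow> real \<Rightarrow> real \<Rightarrow> real \<Rightarrow> real \<Rightarrow> real
    \<Rightarrow> complex poly poly \<Rightarrow> real \<times> real \<Rightarrow> complex" where
  "twisted_wave \<alpha> \<beta> \<gamma> \<delta> u \<xi> \<eta> G =
     (\<lambda>(x,y). plane_wave \<xi> \<eta> (x,y) * sheared_poly \<alpha> \<beta> \<gamma> \<delta> u G ((x,y),(\<xi>,\<eta>)))"

lemma Dx_twisted_wave:
  "Dx (twisted_wave \<alpha> \<beta> \<gamma> \<delta> u \<xi> \<eta> G) (x,y) = plane_wave \<xi> \<eta> (x,y) *
     (of_real \<xi> * sheared_poly \<alpha> \<beta> \<gamma> \<delta> u G ((x,y),(\<xi>,\<eta>))
      + \<i> * of_real \<beta> * sheared_poly \<alpha> \<beta> \<gamma> \<delta> u (map_poly pderiv G) ((x,y),(\<xi>,\<eta>)))"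
proof -
  define A where "A = complex_of_real (\<alpha> * \<eta> - u * (\<gamma> * \<xi> - \<delta> * y))"
  define B where "B = complex_of_real (- \<beta>)"
  define C where "C = complex_of_real (\<gamma> * \<xi> - \<delta> * y)"
  define X where "X = exp (\<i> * (of_real x * of_real \<xi> + of_real (y * \<eta>)))"
  define f where "f = (\<lambda>w. exp (\<i> * (w * of_real \<xi> + of_real (y * \<eta>))) * poly2 G (A + B * w) (C + 0 * w))"
  have wave: "((\<lambda>w. exp (\<i> * (w * of_real \<xi> + of_real (y * \<eta>)))) has_field_derivative
      X * (\<i> * of_real \<xi>)) (at (of_real x))"
    unfolding X_def by (auto intro!: derivative_eq_intros)
  have "(f has_field_derivative
      X * (B * poly2 (map_poly pderiv G) (A + B * of_real x) (C + 0 * of_real x)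
        + 0 * poly2 (pderiv G) (A + B * of_real x) (C + 0 * of_real x))
      + X * (\<i> * of_real \<xi>) * poly2 G (A + B * of_real x) (C + 0 * of_real x)) (at (of_real x))"
    unfolding f_def X_def by (rule DERIV_mult'[OF wave[unfolded X_def] poly2_affine_has_field_derivative])
  moreover have "(\<lambda>t. twisted_wave \<alpha> \<beta> \<gamma> \<delta> u \<xi> \<eta> G (t, y)) = (\<lambda>t. f (of_real t))"
    by (rule ext) (simp add: twisted_wave_def sheared_poly_def plane_wave_def f_def
        A_def B_def C_def algebra_simps)
  ultimately show ?thesis
    by (simp add: Dx_def vector_derivative_of_real_comp sheared_poly_def plane_wave_def
        A_def B_def C_def X_def algebra_simps)
qed

lemma Dy_twisted_wave:
  "Dy (twisted_wave \<alpha> \<beta> \<gamma> \<delta> u \<xi> \<eta> G) (x,y) = plane_wave \<xi> \<eta> (x,y) *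
     (of_real \<eta> * sheared_poly \<alpha> \<beta> \<gamma> \<delta> u G ((x,y),(\<xi>,\<eta>))
      - \<i> * of_real (u * \<delta>) * sheared_poly \<alpha> \<beta> \<gamma> \<delta> u (map_poly pderiv G) ((x,y),(\<xi>,\<eta>))
      + \<i> * of_real \<delta> * sheared_poly \<alpha> \<beta> \<gamma> \<delta> u (pderiv G) ((x,y),(\<xi>,\<eta>)))"
proof -
  define A where "A = complex_of_real (\<alpha> * \<eta> - \<beta> * x - u * \<gamma> * \<xi>)"
  define B where "B = complex_of_real (u * \<delta>)"
  define C where "C = complex_of_real (\<gamma> * \<xi>)"
  define D where "D = complex_of_real (- \<delta>)"
  define X where "X = exp (\<i> * (of_real (x * \<xi>) + of_real y * of_real \<eta>))"
  define f where "f = (\<lambda>w. exp (\<i> * (of_real (x * \<xi>) + w * of_real \<eta>)) * poly2 G (A + B * w) (C + D * w))"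
  have wave: "((\<lambda>w. exp (\<i> * (of_real (x * \<xi>) + w * of_real \<eta>))) has_field_derivative
      X * (\<i> * of_real \<eta>)) (at (of_real y))"
    unfolding X_def by (auto intro!: derivative_eq_intros)
  have "(f has_field_derivative
      X * (B * poly2 (map_poly pderiv G) (A + B * of_real y) (C + D * of_real y)
        + D * poly2 (pderiv G) (A + B * of_real y) (C + D * of_real y))
      + X * (\<i> * of_real \<eta>) * poly2 G (A + B * of_real y) (C + D * of_real y)) (at (of_real y))"
    unfolding f_def X_def by (rule DERIV_mult'[OF wave[unfolded X_def] poly2_affine_has_field_derivative])
  moreover have "(\<lambda>t. twisted_wave \<alpha> \<beta> \<gamma> \<delta> u \<xi> \<eta> G (x, t)) = (\<lambda>t. f (of_real t))"
    by (rule ext) (simp add: twisted_wave_def sheared_poly_def plane_wave_def f_def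
        A_def B_def C_def D_def algebra_simps)
  ultimately show ?thesis
    by (simp add: Dy_def vector_derivative_of_real_comp sheared_poly_def plane_wave_def
        A_def B_def C_def D_def X_def algebra_simps)
qed

lemma twQ_twisted_wave:
  "twQ \<gamma> \<delta> (twisted_wave \<alpha> \<beta> \<gamma> \<delta> u \<xi> \<eta> G) = twisted_wave \<alpha> \<beta> \<gamma> \<delta> u \<xi> \<eta> (twQ_poly \<beta> \<gamma> G)"
proof (rule ext, clarify)
  fix x y
  show "twQ \<gamma> \<delta> (twisted_wave \<alpha> \<beta> \<gamma> \<delta> u \<xi> \<eta> G) (x, y) =
      twisted_wave \<alpha> \<beta> \<gamma> \<delta> u \<xi> \<eta> (twQ_poly \<beta> \<gamma> G) (x, y)"
    unfolding twQ_def Dx_twisted_wave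
    by (simp add: twisted_wave_def sheared_poly_def twQ_poly_def algebra_simps)
qed

lemma twP_twisted_wave:
  "twP \<alpha> \<beta> (twisted_wave \<alpha> \<beta> \<gamma> \<delta> u \<xi> \<eta> G) = twisted_wave \<alpha> \<beta> \<gamma> \<delta> u \<xi> \<eta> (twP_poly \<alpha> \<delta> u G)"
proof (rule ext, clarify)
  fix x y
  show "twP \<alpha> \<beta> (twisted_wave \<alpha> \<beta> \<gamma> \<delta> u \<xi> \<eta> G) (x, y) =
      twisted_wave \<alpha> \<beta> \<gamma> \<delta> u \<xi> \<eta> (twP_poly \<alpha> \<delta> u G) (x, y)"
    unfolding twP_def Dy_twisted_wave
    by (simp add: twisted_wave_def sheared_poly_def twP_poly_def algebra_simps)
qed

lemma twisted_wave_const: "twisted_wave \<alpha> \<beta> \<gamma> \<delta> u \<xi> \<eta> [:[:K:]:] = (\<lambda>z. K * plane_wave \<xi> \<eta> z)"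
  by (auto simp: twisted_wave_def sheared_poly_def)

lemma Dx_scaled_plane_wave: "Dx (\<lambda>z. K * plane_wave \<xi> \<eta> z) = (\<lambda>z. (K * of_real \<xi>) * plane_wave \<xi> \<eta> z)"
  using Dx_twisted_wave[of 0 0 0 0 0 \<xi> \<eta> "[:[:K:]:]"]
  by (auto simp: twisted_wave_const sheared_poly_def map_poly_pCons)

lemma Dy_scaled_plane_wave: "Dy (\<lambda>z. K * plane_wave \<xi> \<eta> z) = (\<lambda>z. (K * of_real \<eta>) * plane_wave \<xi> \<eta> z)"
  using Dy_twisted_wave[of 0 0 0 0 0 \<xi> \<eta> "[:[:K:]:]"]
  by (auto simp: twisted_wave_const sheared_poly_def map_poly_pCons)

lemma smooth2_plane_wave: "smooth2 (plane_wave \<xi> \<eta>)"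
  unfolding smooth2_def
proof
  fix ws
  have "\<exists>K. Dword ws (plane_wave \<xi> \<eta>) = (\<lambda>z. K * plane_wave \<xi> \<eta> z)"
  proof (induction ws)
    case Nil
    show ?case by (intro exI[of _ 1]) simp
  next
    case (Cons b ws)
    then show ?case by (auto simp: Dx_scaled_plane_wave Dy_scaled_plane_wave)
  qed
  then obtain K where K: "Dword ws (plane_wave \<xi> \<eta>) = (\<lambda>z. K * plane_wave \<xi> \<eta> z)"
    by auto
  have phase: "((\<lambda>z::real \<times> real. \<i> * complex_of_real (fst z * \<xi> + snd z * \<eta>)) has_derivative
      (\<lambda>h. \<i> * complex_of_real (fst h * \<xi> + snd h * \<eta>))) (at z)" for z
    by (auto intro!: derivative_eq_intros)
  have "(\<lambda>z. K * plane_wave \<xi> \<eta> z) differentiable (at z)" for z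
    using has_derivative_mult_right[OF has_derivative_compose[OF phase
        DERIV_exp[unfolded has_field_derivative_def]], of K]
    unfolding plane_wave_def case_prod_unfold differentiable_def by blast
  then show "Dword ws (plane_wave \<xi> \<eta>) differentiable_on UNIV"
    unfolding K differentiable_on_def by blast
qed

lemma Dx_Dy_iterate_plane_wave:
  "(Dx ^^ p) ((Dy ^^ q) (plane_wave \<xi> \<eta>)) = (\<lambda>z. (of_real \<xi> ^ p * of_real \<eta> ^ q) * plane_wave \<xi> \<eta> z)"
proof -
  have Dy_iter: "(Dy ^^ q) (\<lambda>z. K * plane_wave \<xi> \<eta> z) = (\<lambda>z. (K * of_real \<eta> ^ q) * plane_wave \<xi> \<eta> z)" for K
    by (induction q arbitrary: K) (simp_all add: Dy_scaled_plane_wave, simp add: mult_ac)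
  have Dx_iter: "(Dx ^^ p) (\<lambda>z. K * plane_wave \<xi> \<eta> z) = (\<lambda>z. (K * of_real \<xi> ^ p) * plane_wave \<xi> \<eta> z)" for K
    by (induction p arbitrary: K) (simp_all add: Dx_scaled_plane_wave, simp add: mult_ac)
  show ?thesis
    using Dy_iter[of 1] Dx_iter[of "of_real \<eta> ^ q"] by (simp add: mult_ac)
qed

lemma twisted_op_plane_wave:
  "twisted_op m a \<alpha> \<beta> \<gamma> \<delta> (plane_wave \<xi> \<eta>) (x,y) =
     plane_wave \<xi> \<eta> (x,y) * sheared_poly \<alpha> \<beta> \<gamma> \<delta> u (twisted_poly m a \<alpha> \<beta> \<gamma> \<delta> u) ((x,y),(\<xi>,\<eta>))"
proof -
  let ?W = "twisted_wave \<alpha> \<beta> \<gamma> \<delta> u \<xi> \<eta>"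
  let ?S = "sheared_poly \<alpha> \<beta> \<gamma> \<delta> u"
  have Q: "(twQ \<gamma> \<delta> ^^ k) (?W G) = ?W ((twQ_poly \<beta> \<gamma> ^^ k) G)" for k G
    by (induction k) (simp_all add: twQ_twisted_wave)
  have P: "(twP \<alpha> \<beta> ^^ j) (?W G) = ?W ((twP_poly \<alpha> \<delta> u ^^ j) G)" for j G
    by (induction j) (simp_all add: twP_twisted_wave)
  have "plane_wave \<xi> \<eta> = ?W 1"
    using twisted_wave_const[of \<alpha> \<beta> \<gamma> \<delta> u \<xi> \<eta> 1] by (simp add: one_pCons)
  then have "twisted_op m a \<alpha> \<beta> \<gamma> \<delta> (plane_wave \<xi> \<eta>) (x,y) = (\<Sum>(k,j)\<in>{(k,j). j + k \<le> m}.
      (-1) ^ (j + k) * a k j * ?W ((twP_poly \<alpha> \<delta> u ^^ j) ((twQ_poly \<beta> \<gamma> ^^ k) 1)) (x,y))"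
    by (simp only: twisted_op_def P Q)
  also have "\<dots> = plane_wave \<xi> \<eta> (x,y) * (\<Sum>(k,j)\<in>{(k,j). j + k \<le> m}.
      (-1) ^ (j + k) * a k j * ?S ((twP_poly \<alpha> \<delta> u ^^ j) ((twQ_poly \<beta> \<gamma> ^^ k) 1)) ((x,y),(\<xi>,\<eta>)))"
    unfolding sum_distrib_left
    by (rule sum.cong[OF refl]) (simp add: twisted_wave_def case_prod_unfold mult.left_commute)
  also have "\<dots> = plane_wave \<xi> \<eta> (x,y) * ?S (twisted_poly m a \<alpha> \<beta> \<gamma> \<delta> u) ((x,y),(\<xi>,\<eta>))"
    unfolding twisted_poly_def sheared_poly_def poly2_sum by (simp add: case_prod_unfold)
  finally show ?thesis .
qed

lemma symbol_of_twisted_op: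
  assumes "represents (twisted_op m a \<alpha> \<beta> \<gamma> \<delta>) N c"
  shows "symbol_of N c = sheared_poly \<alpha> \<beta> \<gamma> \<delta> u (twisted_poly m a \<alpha> \<beta> \<gamma> \<delta> u)"
proof (rule ext, clarify)
  fix x y \<xi> \<eta> :: real
  have "twisted_op m a \<alpha> \<beta> \<gamma> \<delta> (plane_wave \<xi> \<eta>) =
      (\<lambda>z. \<Sum>p\<le>N. \<Sum>q\<le>N. c p q z * (Dx ^^ p) ((Dy ^^ q) (plane_wave \<xi> \<eta>)) z)"
    using assms smooth2_plane_wave unfolding represents_def by blast
  then have "twisted_op m a \<alpha> \<beta> \<gamma> \<delta> (plane_wave \<xi> \<eta>) (x,y) =
      plane_wave \<xi> \<eta> (x,y) * symbol_of N c ((x,y),(\<xi>,\<eta>))"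
    by (simp add: Dx_Dy_iterate_plane_wave symbol_of_def sum_distrib_left mult_ac)
  moreover have "plane_wave \<xi> \<eta> (x,y) \<noteq> 0"
    by (simp add: plane_wave_def)
  ultimately show "symbol_of N c ((x,y),(\<xi>,\<eta>)) =
      sheared_poly \<alpha> \<beta> \<gamma> \<delta> u (twisted_poly m a \<alpha> \<beta> \<gamma> \<delta> u) ((x,y),(\<xi>,\<eta>))"
    using twisted_op_plane_wave[of m a \<alpha> \<beta> \<gamma> \<delta> \<xi> \<eta> x y u] by (metis mult_left_cancel)
qed

lemma pderiv_map_poly_eval:
  "pderiv (map_poly (\<lambda>p. poly p s) F) = map_poly (\<lambda>p. poly p s) (pderiv F)"
  by (intro poly_eqI) (simp add: coeff_pderiv coeff_map_poly of_nat_poly del: of_nat_Suc)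

lemma pdir_sheared_poly_x:
  "pdir (sheared_poly \<alpha> \<beta> \<gamma> \<delta> u F) ((1,0),(0,0)) ((x,y),(\<xi>,\<eta>)) =
     - of_real \<beta> * sheared_poly \<alpha> \<beta> \<gamma> \<delta> u (map_poly pderiv F) ((x,y),(\<xi>,\<eta>))"
proof -
  define A where "A = complex_of_real (\<alpha> * \<eta> - \<beta> * x - u * (\<gamma> * \<xi> - \<delta> * y))"
  define B where "B = complex_of_real (- \<beta>)"
  define C where "C = complex_of_real (\<gamma> * \<xi> - \<delta> * y)"
  have "(\<lambda>t. sheared_poly \<alpha> \<beta> \<gamma> \<delta> u F (((x,y),(\<xi>,\<eta>)) + t *\<^sub>R ((1,0),(0,0))))
      = (\<lambda>t. poly2 F (A + B * of_real t) (C + 0 * of_real t))"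
    by (rule ext) (simp add: sheared_poly_def A_def B_def C_def algebra_simps)
  then have "pdir (sheared_poly \<alpha> \<beta> \<gamma> \<delta> u F) ((1,0),(0,0)) ((x,y),(\<xi>,\<eta>)) =
      B * poly2 (map_poly pderiv F) (A + B * of_real 0) (C + 0 * of_real 0)
      + 0 * poly2 (pderiv F) (A + B * of_real 0) (C + 0 * of_real 0)"
    unfolding pdir_def by (simp only: vector_derivative_of_real_comp[OF poly2_affine_has_field_derivative])
  then show ?thesis
    by (simp add: sheared_poly_def A_def B_def C_def)
qed

lemma pdir_sheared_poly_y:
  "pdir (sheared_poly \<alpha> \<beta> \<gamma> \<delta> u F) ((0,1),(0,0)) ((x,y),(\<xi>,\<eta>)) =
     of_real (u * \<delta>) * sheared_poly \<alpha> \<beta> \<gamma> \<delta> u (map_poly pderiv F) ((x,y),(\<xi>,\<eta>))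
     - of_real \<delta> * sheared_poly \<alpha> \<beta> \<gamma> \<delta> u (pderiv F) ((x,y),(\<xi>,\<eta>))"
proof -
  define A where "A = complex_of_real (\<alpha> * \<eta> - \<beta> * x - u * (\<gamma> * \<xi> - \<delta> * y))"
  define B where "B = complex_of_real (u * \<delta>)"
  define C where "C = complex_of_real (\<gamma> * \<xi> - \<delta> * y)"
  define D where "D = complex_of_real (- \<delta>)"
  have "(\<lambda>t. sheared_poly \<alpha> \<beta> \<gamma> \<delta> u F (((x,y),(\<xi>,\<eta>)) + t *\<^sub>R ((0,1),(0,0))))
      = (\<lambda>t. poly2 F (A + B * of_real t) (C + D * of_real t))"
    by (rule ext) (simp add: sheared_poly_def A_def B_def C_def D_def algebra_simps)
  then have "pdir (sheared_poly \<alpha> \<beta> \<gamma> \<delta> u F) ((0,1),(0,0)) ((x,y),(\<xi>,\<eta>)) =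
      B * poly2 (map_poly pderiv F) (A + B * of_real 0) (C + D * of_real 0)
      + D * poly2 (pderiv F) (A + B * of_real 0) (C + D * of_real 0)"
    unfolding pdir_def by (simp only: vector_derivative_of_real_comp[OF poly2_affine_has_field_derivative])
  then show ?thesis
    by (simp add: sheared_poly_def A_def B_def C_def D_def)
qed

lemma glob_hypoelliptic_nonzero_far:
  assumes "glob_hypoelliptic a"
  shows "\<exists>R. \<forall>z. R \<le> norm z \<longrightarrow> a z \<noteq> 0"
proof -
  obtain K where K: "compact K" "\<And>z. z \<notin> K \<Longrightarrow> a z \<noteq> 0"
    using assms unfolding glob_hypoelliptic_def by blast
  then obtain R where "\<And>z. z \<in> K \<Longrightarrow> norm z \<le> R"
    using compact_imp_bounded bounded_iff by metis
  then have "\<forall>z. R + 1 \<le> norm z \<longrightarrow> a z \<noteq> 0"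
    using K(2) by fastforce
  then show ?thesis ..
qed

lemma not_glob_hypoelliptic_if_constant_on_ray:
  fixes a :: "'a::euclidean_space \<Rightarrow> complex" and z :: "real \<Rightarrow> 'a"
  assumes "b \<in> Basis" and "\<And>r. r \<le> norm (z r)"
    and "\<And>r. a (z r) = V" and "\<And>r. pdir a b (z r) = W" and "W \<noteq> 0"
  shows "\<not> glob_hypoelliptic a"
proof
  assume hypo: "glob_hypoelliptic a"
  then obtain R where "\<And>w. R \<le> norm w \<Longrightarrow> a w \<noteq> 0"
    using glob_hypoelliptic_nonzero_far by blast
  then have "V \<noteq> 0"
    using assms(2,3) by metis
  have "((\<lambda>w. pdir a b w / a w) \<longlongrightarrow> 0) at_infinity"
    using hypo assms(1) unfolding glob_hypoelliptic_def by blast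
  then obtain R' where "\<And>w. R' \<le> norm w \<Longrightarrow> dist (pdir a b w / a w) 0 < norm (W / V)"
    using \<open>V \<noteq> 0\<close> \<open>W \<noteq> 0\<close> unfolding Lim_at_infinity by (metis divide_eq_0_iff zero_less_norm_iff)
  from this[OF assms(2)] show False
    using assms(3,4) by simp
qed

lemma not_glob_hypoelliptic_sheared_poly:
  assumes "\<beta> \<noteq> 0" and "\<delta> \<noteq> 0" and "degree (map_poly (\<lambda>p. poly p 0) F) \<noteq> 0"
  shows "\<not> glob_hypoelliptic (sheared_poly \<alpha> \<beta> \<gamma> \<delta> u F)"
proof -
  let ?S = "sheared_poly \<alpha> \<beta> \<gamma> \<delta> u"
  have "pderiv (map_poly (\<lambda>p. poly p 0) F) \<noteq> 0"
    using assms(3) by (simp add: pderiv_eq_0_iff)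
  then obtain t\<^sub>0 :: real where "poly (pderiv (map_poly (\<lambda>p. poly p 0) F)) (of_real t\<^sub>0) \<noteq> 0"
    using poly_nonzero_at_real by blast
  then have Dt: "poly2 (pderiv F) 0 (of_real t\<^sub>0) \<noteq> 0"
    by (simp add: pderiv_map_poly_eval poly2_def)
  define ray where "ray r = ((- u * t\<^sub>0 / \<beta>, (\<gamma> * r - t\<^sub>0) / \<delta>), (r, 0::real))" for r
  have far: "r \<le> norm (ray r)" for r
  proof -
    have "r \<le> norm (r, 0::real)"
      using norm_fst_le[of r 0] by simp
    also have "\<dots> \<le> norm (ray r)"
      unfolding ray_def by (rule norm_snd_le)
    finally show ?thesis .
  qed
  have on_fibre: "?S G (ray r) = poly2 G 0 (of_real t\<^sub>0)" for G r
  proof -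
    have "\<alpha> * 0 - \<beta> * (- u * t\<^sub>0 / \<beta>) - u * (\<gamma> * r - \<delta> * ((\<gamma> * r - t\<^sub>0) / \<delta>)) = 0"
      "\<gamma> * r - \<delta> * ((\<gamma> * r - t\<^sub>0) / \<delta>) = t\<^sub>0"
      using assms(1,2) by (simp_all add: field_simps)
    then show ?thesis
      unfolding ray_def sheared_poly_def by (simp only: prod.case) simp
  qed
  show ?thesis
  proof (cases "poly2 (map_poly pderiv F) 0 (of_real t\<^sub>0) = 0")
    case True
    have W: "pdir (?S F) ((0,1),(0,0)) (ray r) = - of_real \<delta> * poly2 (pderiv F) 0 (of_real t\<^sub>0)" for r
      using pdir_sheared_poly_y[of \<alpha> \<beta> \<gamma> \<delta> u F] True on_fibre by (simp add: ray_def)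
    have b: "((0,1),(0,0)) \<in> (Basis :: ((real \<times> real) \<times> (real \<times> real)) set)"
      by (simp add: Basis_prod_def zero_prod_def)
    show ?thesis
      using Dt assms(2)
      by (intro not_glob_hypoelliptic_if_constant_on_ray[where z = ray and a = "?S F", OF b far on_fibre W]) simp
  next
    case False
    have W: "pdir (?S F) ((1,0),(0,0)) (ray r) = - of_real \<beta> * poly2 (map_poly pderiv F) 0 (of_real t\<^sub>0)" for r
      using pdir_sheared_poly_x[of \<alpha> \<beta> \<gamma> \<delta> u F] on_fibre by (simp add: ray_def)
    have b: "((1,0),(0,0)) \<in> (Basis :: ((real \<times> real) \<times> (real \<times> real)) set)"
      by (simp add: Basis_prod_def zero_prod_def)
    show ?thesis
      using False assms(1)
      by (intro not_glob_hypoelliptic_if_constant_on_ray[where z = ray and a = "?S F", OF b far on_fibre W]) simp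
  qed
qed

theorem proposition3p1:
  fixes m :: nat and a :: "nat \<Rightarrow> nat \<Rightarrow> complex" and \<alpha> \<beta> \<gamma> \<delta> :: real
    and N :: nat and c :: "nat \<Rightarrow> nat \<Rightarrow> real \<times> real \<Rightarrow> complex"
  assumes "\<alpha> * \<delta> - \<beta> * \<gamma> = 1"
    and "\<beta> * \<delta> \<noteq> 0"
    and "m \<ge> 1"
    and "\<exists>k j. j + k = m \<and> a k j \<noteq> 0"
    and "represents (twisted_op m a \<alpha> \<beta> \<gamma> \<delta>) N c"
  shows "\<not> glob_hypoelliptic (symbol_of N c)"
proof -
  obtain u :: real where u: "poly (principal_poly m a) (of_real u) \<noteq> 0"
    using poly_nonzero_at_real[OF principal_poly_nonzero[OF assms(4)]] by blast
  have "degree (map_poly (\<lambda>p. poly p 0) (twisted_poly m a \<alpha> \<beta> \<gamma> \<delta> u)) = m"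
    using degree_map_poly_eval_const_top_coeff[OF const_top_coeff_twisted_poly] u by simp
  then have "\<not> glob_hypoelliptic (sheared_poly \<alpha> \<beta> \<gamma> \<delta> u (twisted_poly m a \<alpha> \<beta> \<gamma> \<delta> u))"
    using assms(2,3) by (intro not_glob_hypoelliptic_sheared_poly) auto
  then show ?thesis
    using symbol_of_twisted_op[OF assms(5)] by simp
qed

end
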